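(* Let $3\le k\le n-1$ and $1\le h\le n-k$. Let $S$ be a minimum $h$-cut of $S_{n,k}$ (so $|S|=\kappa_s^{(h)}(S_{n,k})$) and let $X$ be the vertex set of a connected component of $S_{n,k}-S$. Fix $t\in\{2,\dots,k\}$, and for $i\in I_n$ let $Y=V(S_{n,k})\setminus(S\cup X)$, $X_i=X\cap V(S^{t:i}_{n-1,k-1})$, $Y_i=Y\cap V(S^{t:i}_{n-1,k-1})$, $S_i=S\cap V(S^{t:i}_{n-1,k-1})$, and $J=\{i\in I_n: X_i\ne\emptyset\}$, $J'=\{i\in J: Y_i\ne\emptyset\}$, $T=\{i\in I_n: Y_i\ne\emptyset\}$. Then: (a) for every $i\in J'$, $S_i$ is an $(h-1)$-cut of $S^{t:i}_{n-1,k-1}$ (viewed as a copy of $S_{n-1,k-1}$); (b) $\kappa_s^{(h)}(S_{n,k})\ge |J'|\,\kappa_s^{(h-1)}(S_{n-1,k-1})$; (c) $J\cup T=I_n$.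
   Context: For integers $1\le k\le n-1$, let $I_n=\{1,\dots,n\}$ and $P(n,k)$ the set of $k$-permutations $p_1p_2\cdots p_k$ of distinct elements of $I_n$. The $(n,k)$-star graph $S_{n,k}$ has vertex set $P(n,k)$; a vertex $p=p_1p_2\cdots p_k$ is adjacent to (a) each vertex obtained by swapping $p_1$ with $p_i$ for $2\le i\le k$, and (b) each vertex $\alpha p_2\cdots p_k$ with $\alpha\in I_n\setminus\{p_1,\dots,p_k\}$. For $2\le t\le k$ and $i\in I_n$, $S^{t:i}_{n-1,k-1}$ is the subgraph of $S_{n,k}$ induced by all vertices whose $t$-th entry equals $i$; it is isomorphic to $S_{n-1,k-1}$, and each of its vertices has exactly one neighbor outside it. For a connected graph $G$ and integer $h\ge 0$, a set $S\subseteq V(G)$ is an $h$-cut if $G-S$ is disconnected and has minimum degree at least $h$; $\kappa_s^{(h)}(G)$ is the minimum cardinality of an $h$-cut of $G$. *)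

theory Defs
  imports Main
begin

definition reach :: "'a set \<Rightarrow> ('a \<Rightarrow> 'a \<Rightarrow> bool) \<Rightarrow> 'a \<Rightarrow> 'a \<Rightarrow> bool" where
  "reach W E u v \<longleftrightarrow> u \<in> W \<and> v \<in> W \<and> (\<lambda>x y. x \<in> W \<and> y \<in> W \<and> E x y)\<^sup>*\<^sup>* u v"

definition hcut :: "'a set \<Rightarrow> ('a \<Rightarrow> 'a \<Rightarrow> bool) \<Rightarrow> nat \<Rightarrow> 'a set \<Rightarrow> bool" where
  "hcut V E h S \<longleftrightarrow> S \<subseteq> V
     \<and> (\<exists>u\<in>V - S. \<exists>v\<in>V - S. \<not> reach (V - S) E u v)
     \<and> (\<forall>v\<in>V - S. h \<le> card {w \<in> V - S. E v w})"

definition kappa_h :: "'a set \<Rightarrow> ('a \<Rightarrow> 'a \<Rightarrow> bool) \<Rightarrow> nat \<Rightarrow> nat" where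
  "kappa_h V E h = Inf {card S | S. hcut V E h S}"

definition component :: "'a set \<Rightarrow> ('a \<Rightarrow> 'a \<Rightarrow> bool) \<Rightarrow> 'a set \<Rightarrow> 'a set \<Rightarrow> bool" where
  "component V E S X \<longleftrightarrow> (\<exists>x \<in> V - S. X = {y. reach (V - S) E x y})"

text \<open>k-permutations of I_n = {1..n}, as lists; entry p_j is p ! (j-1).\<close>
definition kperms :: "nat \<Rightarrow> nat \<Rightarrow> nat list set" where
  "kperms n k = {p. length p = k \<and> distinct p \<and> set p \<subseteq> {1..n}}"

definition star_adj :: "nat \<Rightarrow> nat \<Rightarrow> nat list \<Rightarrow> nat list \<Rightarrow> bool" where
  "star_adj n k p q \<longleftrightarrow>
     (\<exists>i. 1 \<le> i \<and> i < k \<and> q = p[0 := p ! i, i := p ! 0])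
   \<or> (\<exists>a \<in> {1..n} - set p. q = p[0 := a])"

definition sub_verts :: "nat \<Rightarrow> nat \<Rightarrow> nat \<Rightarrow> nat \<Rightarrow> nat list set" where
  "sub_verts n k t i = {p \<in> kperms n k. p ! (t - 1) = i}"

end

theory Submission
  imports Defs
begin

(* Fix the position t and split S(n,k) into the layers S^{t:i}, i = 1..n (vertices whose
   t-th entry is i).  Three facts drive the proof:
   (1) every vertex of a layer has at most one neighbour outside it (the swap of the first
       and the t-th entry), so a layer meeting both the component X and the rest Y of
       G - S inherits from S an (h-1)-cut;  this is a statement about arbitrary graphs;
   (2) each layer is isomorphic to S(n-1,k-1) (delete the t-th entry and renumber), and
       h-cuts are invariant under isomorphism, so such a cut has at least
       kappa^(h-1)(S(n-1,k-1)) vertices; summing over the disjoint layers gives (b);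
   (3) S(n,k) has an h-cut smaller than a layer: the neighbourhood of the clique
       {a p_2...p_k : a not among p_2..p_k}; hence no layer lies inside a minimum h-cut,
       i.e. every layer meets X or Y, which is (c). *)

section \<open>Reachability and h-cuts in arbitrary graphs\<close>

lemma reach_trans: "reach W E u v \<Longrightarrow> reach W E v w \<Longrightarrow> reach W E u w"
  unfolding reach_def by (meson rtranclp_trans)

lemma reach_mono: "reach W E u v \<Longrightarrow> W \<subseteq> W2 \<Longrightarrow> reach W2 E u v"
proof -
  assume r: "reach W E u v" and s: "W \<subseteq> W2"
  have "(\<lambda>x y. x \<in> W \<and> y \<in> W \<and> E x y)\<^sup>*\<^sup>* u v" using r unfolding reach_def by simp
  hence "(\<lambda>x y. x \<in> W2 \<and> y \<in> W2 \<and> E x y)\<^sup>*\<^sup>* u v"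
    by (rule rtranclp_mono[THEN predicate2D, rotated]) (use s in auto)
  thus ?thesis using r s unfolding reach_def by auto
qed

lemma reach_map:
  assumes "reach W E u v" "\<forall>x\<in>W. g x \<in> W2" "\<forall>x\<in>W. \<forall>y\<in>W. E x y \<longrightarrow> E2 (g x) (g y)"
  shows "reach W2 E2 (g u) (g v)"
proof -
  have uv: "u \<in> W" "v \<in> W" and r: "(\<lambda>x y. x \<in> W \<and> y \<in> W \<and> E x y)\<^sup>*\<^sup>* u v"
    using assms(1) unfolding reach_def by auto
  have "(\<lambda>x y. x \<in> W2 \<and> y \<in> W2 \<and> E2 x y)\<^sup>*\<^sup>* (g u) (g v)"
    using r
  proof (induction rule: rtranclp_induct)
    case base then show ?case by simp
  next
    case (step y z)
    have "g y \<in> W2" "g z \<in> W2" "E2 (g y) (g z)" using step assms(2,3) by auto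
    with step.IH show ?case by (simp add: rtranclp.rtrancl_into_rtrancl)
  qed
  thus ?thesis using uv assms(2) unfolding reach_def by auto
qed

lemma reach_closed:
  assumes "reach W E u v" "u \<in> A" "\<forall>x\<in>A. \<forall>y\<in>W. E x y \<longrightarrow> y \<in> A"
  shows "v \<in> A"
proof -
  have "(\<lambda>x y. x \<in> W \<and> y \<in> W \<and> E x y)\<^sup>*\<^sup>* u v"
    using assms(1) unfolding reach_def by auto
  thus ?thesis
    by (induction rule: rtranclp_induct) (use assms(2,3) in auto)
qed

lemma kappa_h_le: "hcut V E h S \<Longrightarrow> kappa_h V E h \<le> card S"
  unfolding kappa_h_def by (rule cInf_lower) auto

lemma min_hcut_no_large_subset:
  assumes "card S = kappa_h V E h" "finite S" "hcut V E h S'" "card S' < card W"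
  shows "\<not> W \<subseteq> S"
proof
  assume "W \<subseteq> S"
  hence "card W \<le> card S" using assms(2) by (rule card_mono[rotated])
  moreover have "card S \<le> card S'" using kappa_h_le[OF assms(3)] assms(1) by simp
  ultimately show False using assms(4) by simp
qed

lemma hcut_iso:
  assumes hc: "hcut V E h S" and fin: "finite V2"
  and m1: "\<forall>x\<in>V. \<phi> x \<in> V2" and m2: "\<forall>y\<in>V2. \<psi> y \<in> V"
  and i1: "\<forall>x\<in>V. \<psi> (\<phi> x) = x" and i2: "\<forall>y\<in>V2. \<phi> (\<psi> y) = y"
  and e1: "\<forall>x\<in>V. \<forall>y\<in>V. E x y \<longrightarrow> E2 (\<phi> x) (\<phi> y)"
  and e2: "\<forall>x\<in>V2. \<forall>y\<in>V2. E2 x y \<longrightarrow> E (\<psi> x) (\<psi> y)"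
  shows "hcut V2 E2 h (\<phi> ` S) \<and> card (\<phi> ` S) = card S"
proof -
  have SV: "S \<subseteq> V" using hc unfolding hcut_def by auto
  have inj: "inj_on \<phi> V" using i1 by (metis inj_onI)
  have mem: "\<And>x. x \<in> V \<Longrightarrow> \<phi> x \<in> \<phi> ` S \<longleftrightarrow> x \<in> S"
    using inj SV by (auto dest: inj_onD)
  have card_eq: "card (\<phi> ` S) = card S" using inj SV by (meson card_image inj_on_subset)
  obtain u v where uv: "u \<in> V - S" "v \<in> V - S" "\<not> reach (V - S) E u v"
    using hc unfolding hcut_def by auto
  have disconnected: "\<not> reach (V2 - \<phi> ` S) E2 (\<phi> u) (\<phi> v)"
  proof
    assume "reach (V2 - \<phi> ` S) E2 (\<phi> u) (\<phi> v)"
    hence "reach (V - S) E (\<psi> (\<phi> u)) (\<psi> (\<phi> v))"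
    proof (rule reach_map)
      show "\<forall>x\<in>V2 - \<phi> ` S. \<psi> x \<in> V - S" using m2 i2 by (metis DiffD1 DiffD2 DiffI image_eqI)
      show "\<forall>x\<in>V2 - \<phi> ` S. \<forall>y\<in>V2 - \<phi> ` S. E2 x y \<longrightarrow> E (\<psi> x) (\<psi> y)" using e2 by auto
    qed
    thus False using uv i1 by auto
  qed
  have degree: "\<forall>v'\<in>V2 - \<phi> ` S. h \<le> card {w \<in> V2 - \<phi> ` S. E2 v' w}"
  proof
    fix v' assume v': "v' \<in> V2 - \<phi> ` S"
    define x where "x = \<psi> v'"
    have x: "x \<in> V - S" "\<phi> x = v'" using v' m2 i2 x_def by (auto, metis image_eqI)
    have "h \<le> card {w \<in> V - S. E x w}" using hc x unfolding hcut_def by auto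
    also have "\<dots> = card (\<phi> ` {w \<in> V - S. E x w})"
      by (rule card_image[symmetric]) (rule inj_on_subset[OF inj], auto)
    also have "\<dots> \<le> card {w \<in> V2 - \<phi> ` S. E2 v' w}"
    proof (rule card_mono)
      show "finite {w \<in> V2 - \<phi> ` S. E2 v' w}" using fin by auto
      show "\<phi> ` {w \<in> V - S. E x w} \<subseteq> {w \<in> V2 - \<phi> ` S. E2 v' w}"
        using x m1 mem e1 by auto
    qed
    finally show "h \<le> card {w \<in> V2 - \<phi> ` S. E2 v' w}" .
  qed
  have image_sub: "\<phi> ` S \<subseteq> V2" using SV m1 by auto
  show ?thesis unfolding hcut_def using image_sub disconnected degree card_eq uv m1 mem by blast
qed

lemma hcut_restrict:
  assumes hc: "hcut V E h S" and comp: "component V E S X" and fin: "finite V"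
    and WV: "W \<subseteq> V"
    and one_out: "\<forall>v\<in>W. \<exists>z. \<forall>w\<in>V - W. E v w \<longrightarrow> w = z"
    and x: "x \<in> X \<inter> W" and y: "y \<in> W - (S \<union> X)"
  shows "hcut W E (h - 1) (S \<inter> W)"
proof -
  obtain x0 where x0: "x0 \<in> V - S" "X = {z. reach (V - S) E x0 z}"
    using comp by (auto simp: component_def)
  have XVS: "X \<subseteq> V - S" using x0 by (auto simp: reach_def)
  have disconnected: "\<not> reach (W - S \<inter> W) E x y"
  proof
    assume "reach (W - S \<inter> W) E x y"
    hence "reach (V - S) E x y" by (rule reach_mono) (use WV in auto)
    moreover have "reach (V - S) E x0 x" using x x0 by auto
    ultimately have "reach (V - S) E x0 y" by (metis reach_trans)
    thus False using x0 y by simp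
  qed
  have degree: "h - 1 \<le> card {w \<in> W - S \<inter> W. E v w}" if v: "v \<in> W - S \<inter> W" for v
  proof -
    define N where "N = {w \<in> V - S. E v w}"
    obtain z where z: "\<forall>w\<in>V - W. E v w \<longrightarrow> w = z" using one_out v by blast
    have "h \<le> card N" using hc v WV by (auto simp: hcut_def N_def)
    moreover have "card N - 1 \<le> card (N - {z})"
      using diff_card_le_card_Diff[of "{z}" N] by simp
    moreover have "N - {z} \<subseteq> {w \<in> W - S \<inter> W. E v w}" using z by (auto simp: N_def)
    hence "card (N - {z}) \<le> card {w \<in> W - S \<inter> W. E v w}"
      using fin WV by (intro card_mono) (auto intro: finite_subset)
    ultimately show ?thesis by linarith
  qed
  have "x \<in> W - S \<inter> W" "y \<in> W - S \<inter> W" using x y XVS by auto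
  thus ?thesis unfolding hcut_def using disconnected degree by blast
qed

lemma card_ge_disjoint_traces:
  assumes "finite S" "finite J" "\<forall>i\<in>J. \<forall>j\<in>J. i \<noteq> j \<longrightarrow> L i \<inter> L j = {}" "\<forall>i\<in>J. K \<le> card (S \<inter> L i)"
  shows "card J * K \<le> card S"
proof -
  have "card J * K \<le> (\<Sum>i\<in>J. card (S \<inter> L i))"
    using sum_bounded_below[of J K "\<lambda>i. card (S \<inter> L i)"] assms(4) by simp
  also have "\<dots> = card (\<Union>i\<in>J. S \<inter> L i)"
    using assms(1-3) by (intro card_UN_disjoint[symmetric]) auto
  also have "\<dots> \<le> card S" using assms(1) by (intro card_mono) auto
  finally show ?thesis .
qed

section \<open>The star graph and its layers\<close>

lemma finite_kperms: "finite (kperms n k)"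
proof -
  have "kperms n k \<subseteq> {xs. set xs \<subseteq> {1..n} \<and> length xs = k}" by (auto simp: kperms_def)
  thus ?thesis by (rule finite_subset) (rule finite_lists_length_eq, simp)
qed

lemma star_adj_swapI: "1 \<le> j \<Longrightarrow> j < k \<Longrightarrow> y = x[0 := x ! j, j := x ! 0] \<Longrightarrow> star_adj n k x y"
  unfolding star_adj_def by blast

lemma star_adj_repI: "y = x[0 := a] \<Longrightarrow> a \<in> {1..n} - set x \<Longrightarrow> star_adj n k x y"
  unfolding star_adj_def by blast

text \<open>The layer of vertices carrying the value \<open>i\<close> at the (0-based) position \<open>p\<close>;
  \<open>sub_verts\<close> counts positions from 1.\<close>
definition layer :: "nat \<Rightarrow> nat \<Rightarrow> nat \<Rightarrow> nat \<Rightarrow> nat list set" where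
  "layer n k p i = {x \<in> kperms n k. x ! p = i}"

lemma sub_verts_layer: "sub_verts n k t i = layer n k (t - 1) i"
  by (simp add: sub_verts_def layer_def)

lemma star_adj_keeps_entry:
  assumes v: "length v = k" and p: "1 \<le> p" "p < k" and e: "star_adj n k v w"
    and ne: "w \<noteq> v[0 := v ! p, p := v ! 0]"
  shows "w ! p = v ! p"
  using e[unfolded star_adj_def]
proof (elim disjE exE bexE conjE)
  fix j assume j: "1 \<le> j" "j < k" "w = v[0 := v ! j, j := v ! 0]"
  hence "j \<noteq> p" using ne by auto
  thus ?thesis using j p v by (simp add: nth_list_update)
next
  fix a assume "a \<in> {1..n} - set v" "w = v[0 := a]"
  thus ?thesis using p by simp
qed

lemma layer_one_outside_nbr:
  assumes "1 \<le> p" "p < k"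
  shows "\<forall>v\<in>layer n k p i. \<exists>z. \<forall>w\<in>kperms n k - layer n k p i. star_adj n k v w \<longrightarrow> w = z"
proof
  fix v assume v: "v \<in> layer n k p i"
  hence "length v = k" by (simp add: layer_def kperms_def)
  thus "\<exists>z. \<forall>w\<in>kperms n k - layer n k p i. star_adj n k v w \<longrightarrow> w = z"
    using star_adj_keeps_entry[OF _ assms] v by (auto simp: layer_def)
qed

lemma layer_trace_hcut:
  assumes "hcut (kperms n k) (star_adj n k) h S" "component (kperms n k) (star_adj n k) S X"
    and "1 \<le> p" "p < k"
    and "x \<in> X \<inter> layer n k p i" "y \<in> layer n k p i - (S \<union> X)"
  shows "hcut (layer n k p i) (star_adj n k) (h - 1) (S \<inter> layer n k p i)"
  using assms layer_one_outside_nbr[OF assms(3,4)]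
  by (intro hcut_restrict[OF assms(1,2) finite_kperms]) (auto simp: layer_def)

section \<open>Each layer is a copy of S(n-1,k-1)\<close>

text \<open>\<open>contract p i\<close> deletes the entry at position \<open>p\<close> (which is \<open>i\<close> on the layer) and
  renumbers the values above \<open>i\<close> downwards; \<open>expand p i\<close> is its inverse.\<close>
definition skip_pos :: "nat \<Rightarrow> nat \<Rightarrow> nat" where
  "skip_pos p m = (if m < p then m else Suc m)"
definition unskip_pos :: "nat \<Rightarrow> nat \<Rightarrow> nat" where
  "unskip_pos p m = (if m < p then m else m - 1)"
definition shift_down :: "nat \<Rightarrow> nat \<Rightarrow> nat" where
  "shift_down i x = (if x < i then x else x - 1)"
definition shift_up :: "nat \<Rightarrow> nat \<Rightarrow> nat" where
  "shift_up i y = (if y < i then y else Suc y)"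
definition contract :: "nat \<Rightarrow> nat \<Rightarrow> nat list \<Rightarrow> nat list" where
  "contract p i x = map (\<lambda>m. shift_down i (x ! skip_pos p m)) [0..<length x - 1]"
definition expand :: "nat \<Rightarrow> nat \<Rightarrow> nat list \<Rightarrow> nat list" where
  "expand p i q = map (\<lambda>m. if m = p then i else shift_up i (q ! unskip_pos p m)) [0..<Suc (length q)]"

lemma unskip_skip[simp]: "unskip_pos p (skip_pos p m) = m"
  by (simp add: skip_pos_def unskip_pos_def)
lemma skip_unskip: "m \<noteq> p \<Longrightarrow> skip_pos p (unskip_pos p m) = m"
  by (auto simp: skip_pos_def unskip_pos_def)
lemma skip_pos_ne[simp]: "skip_pos p m \<noteq> p"
  by (simp add: skip_pos_def)

lemma shift_down_up[simp]: "shift_down i (shift_up i y) = y"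
  by (simp add: shift_down_def shift_up_def)
lemma shift_up_down: "x \<noteq> i \<Longrightarrow> shift_up i (shift_down i x) = x"
  by (auto simp: shift_down_def shift_up_def)
lemma shift_up_ne[simp]: "shift_up i y \<noteq> i" "i \<noteq> shift_up i y"
  by (simp_all add: shift_up_def)
lemma shift_up_inj[simp]: "shift_up i x = shift_up i y \<longleftrightarrow> x = y"
  by (auto simp: shift_up_def)
lemma shift_down_inj: "x \<noteq> i \<Longrightarrow> y \<noteq> i \<Longrightarrow> shift_down i x = shift_down i y \<longleftrightarrow> x = y"
  by (metis shift_up_down)

lemma length_contract[simp]: "length (contract p i x) = length x - 1"
  by (simp add: contract_def)
lemma nth_contract: "m < length x - 1 \<Longrightarrow> contract p i x ! m = shift_down i (x ! skip_pos p m)"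
  by (simp add: contract_def)
lemma length_expand[simp]: "length (expand p i q) = Suc (length q)"
  by (simp add: expand_def)
lemma nth_expand:
  "m < Suc (length q) \<Longrightarrow> expand p i q ! m = (if m = p then i else shift_up i (q ! unskip_pos p m))"
  by (simp add: expand_def del: upt_Suc)

lemma set_contract:
  assumes "p < length x" "distinct x" "x ! p = i"
  shows "set (contract p i x) = shift_down i ` (set x - {i})"
proof
  show "set (contract p i x) \<subseteq> shift_down i ` (set x - {i})"
  proof
    fix y assume "y \<in> set (contract p i x)"
    then obtain m where m: "m < length x - 1" "y = shift_down i (x ! skip_pos p m)"
      by (auto simp: in_set_conv_nth nth_contract)
    have "skip_pos p m < length x" using m by (auto simp: skip_pos_def)
    moreover have "x ! skip_pos p m \<noteq> i"
      using assms calculation by (metis skip_pos_ne nth_eq_iff_index_eq)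
    ultimately show "y \<in> shift_down i ` (set x - {i})" using m by auto
  qed
  show "shift_down i ` (set x - {i}) \<subseteq> set (contract p i x)"
  proof
    fix y assume "y \<in> shift_down i ` (set x - {i})"
    then obtain z where z: "z \<in> set x" "z \<noteq> i" "y = shift_down i z" by blast
    then obtain j where j: "j < length x" "x ! j = z" by (auto simp: in_set_conv_nth)
    have "j \<noteq> p" using j z assms by auto
    hence "unskip_pos p j < length x - 1" "skip_pos p (unskip_pos p j) = j"
      using j assms by (auto simp: unskip_pos_def skip_pos_def)
    thus "y \<in> set (contract p i x)" using j z by (metis nth_contract nth_mem length_contract)
  qed
qed

lemma set_expand:
  assumes "p \<le> length q"
  shows "set (expand p i q) = insert i (shift_up i ` set q)"
proof
  show "set (expand p i q) \<subseteq> insert i (shift_up i ` set q)"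
  proof
    fix y assume "y \<in> set (expand p i q)"
    then obtain m where m: "m < Suc (length q)" "y = expand p i q ! m" by (auto simp: in_set_conv_nth)
    show "y \<in> insert i (shift_up i ` set q)"
    proof (cases "m = p")
      case False
      hence "unskip_pos p m < length q" using m assms by (auto simp: unskip_pos_def)
      thus ?thesis using m False by (simp add: nth_expand)
    qed (use m in \<open>simp add: nth_expand\<close>)
  qed
  show "insert i (shift_up i ` set q) \<subseteq> set (expand p i q)"
  proof
    fix y assume "y \<in> insert i (shift_up i ` set q)"
    then consider "y = i" | j where "j < length q" "y = shift_up i (q ! j)"
      by (auto simp: in_set_conv_nth)
    thus "y \<in> set (expand p i q)"
    proof cases
      case 1 thus ?thesis using assms nth_mem[of p "expand p i q"] by (simp add: nth_expand)
    next
      case 2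
      hence "skip_pos p j < Suc (length q)" by (auto simp: skip_pos_def)
      thus ?thesis using 2 nth_mem[of "skip_pos p j" "expand p i q"] by (simp add: nth_expand)
    qed
  qed
qed

lemma contract_update_hd:
  assumes "1 \<le> p"
  shows "contract p i (x[0 := a]) = (contract p i x)[0 := shift_down i a]"
proof (rule nth_equalityI)
  fix m assume "m < length (contract p i (x[0 := a]))"
  moreover have "skip_pos p m = 0 \<longleftrightarrow> m = 0" "skip_pos p 0 = 0" using assms by (auto simp: skip_pos_def)
  moreover have "m < length x - 1 \<Longrightarrow> skip_pos p m < length x" by (auto simp: skip_pos_def)
  ultimately show "contract p i (x[0 := a]) ! m = (contract p i x)[0 := shift_down i a] ! m"
    by (auto simp: nth_contract nth_list_update)
qed simp

lemma contract_swap: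
  assumes "1 \<le> p" "p < length x" "1 \<le> j" "j < length x" "j \<noteq> p"
  defines "j' \<equiv> unskip_pos p j"
  shows "contract p i (x[0 := x ! j, j := x ! 0])
       = (contract p i x)[0 := contract p i x ! j', j' := contract p i x ! 0]"
proof (rule nth_equalityI)
  have j': "j' < length x - 1" "skip_pos p j' = j" "1 \<le> j'" "skip_pos p 0 = 0"
    using assms by (auto simp: j'_def unskip_pos_def skip_pos_def)
  fix m assume m: "m < length (contract p i (x[0 := x ! j, j := x ! 0]))"
  have inj: "skip_pos p m = j \<longleftrightarrow> m = j'" "skip_pos p m = 0 \<longleftrightarrow> m = 0"
    using j' by (auto simp: skip_pos_def split: if_splits)
  have "skip_pos p m < length x" using m by (auto simp: skip_pos_def)
  thus "contract p i (x[0 := x ! j, j := x ! 0]) ! m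
      = (contract p i x)[0 := contract p i x ! j', j' := contract p i x ! 0] ! m"
    using m j' inj by (auto simp: nth_contract nth_list_update)
qed simp

lemma expand_update_hd:
  assumes "1 \<le> p" "p \<le> length q" "q \<noteq> []"
  shows "expand p i (q[0 := a]) = (expand p i q)[0 := shift_up i a]"
proof (rule nth_equalityI)
  fix m assume "m < length (expand p i (q[0 := a]))"
  moreover have "m \<noteq> p \<Longrightarrow> unskip_pos p m = 0 \<longleftrightarrow> m = 0" using assms by (auto simp: unskip_pos_def)
  moreover have "m \<noteq> p \<Longrightarrow> m < Suc (length q) \<Longrightarrow> unskip_pos p m < length q"
    using assms by (auto simp: unskip_pos_def)
  ultimately show "expand p i (q[0 := a]) ! m = (expand p i q)[0 := shift_up i a] ! m"
    using assms by (auto simp: nth_expand nth_list_update)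
qed simp

lemma expand_swap:
  assumes "1 \<le> p" "p \<le> length q" "1 \<le> j" "j < length q"
  defines "j' \<equiv> skip_pos p j"
  shows "expand p i (q[0 := q ! j, j := q ! 0])
       = (expand p i q)[0 := expand p i q ! j', j' := expand p i q ! 0]"
proof (rule nth_equalityI)
  fix m assume m: "m < length (expand p i (q[0 := q ! j, j := q ! 0]))"
  have j': "j' < Suc (length q)" "j' \<noteq> p" "j' \<noteq> 0" "unskip_pos p j' = j" "unskip_pos p 0 = 0"
    using assms by (auto simp: j'_def skip_pos_def unskip_pos_def)
  have "m \<noteq> p \<Longrightarrow> unskip_pos p m < length q" "m \<noteq> p \<Longrightarrow> unskip_pos p m = 0 \<longleftrightarrow> m = 0"
    "m \<noteq> p \<Longrightarrow> unskip_pos p m = j \<longleftrightarrow> m = j'"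
    using m assms j' by (auto simp: unskip_pos_def j'_def skip_pos_def)
  thus "expand p i (q[0 := q ! j, j := q ! 0]) ! m
      = (expand p i q)[0 := expand p i q ! j', j' := expand p i q ! 0] ! m"
    using m j' assms(1) by (auto simp: nth_expand nth_list_update)
qed simp

context
  fixes n k p i :: nat
  assumes p: "1 \<le> p" "p < k" and i: "i \<in> {1..n}"
begin

lemma contract_in:
  assumes x: "x \<in> layer n k p i"
  shows "contract p i x \<in> kperms (n - 1) (k - 1)"
proof -
  have x1: "length x = k" "distinct x" "set x \<subseteq> {1..n}" "x ! p = i"
    using x by (auto simp: layer_def kperms_def)
  have skip: "\<And>m. m < k - 1 \<Longrightarrow> skip_pos p m < k" using p by (auto simp: skip_pos_def)
  have ne: "\<And>m. m < k - 1 \<Longrightarrow> x ! skip_pos p m \<noteq> i"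
    using x1 skip p by (metis skip_pos_ne nth_eq_iff_index_eq)
  have "distinct (contract p i x)"
    unfolding distinct_conv_nth
  proof (intro allI impI)
    fix a b assume ab: "a < length (contract p i x)" "b < length (contract p i x)" "a \<noteq> b"
    hence "skip_pos p a \<noteq> skip_pos p b" by (metis unskip_skip)
    hence "x ! skip_pos p a \<noteq> x ! skip_pos p b" using ab x1 skip by (simp add: nth_eq_iff_index_eq)
    thus "contract p i x ! a \<noteq> contract p i x ! b" using ab x1 ne by (simp add: nth_contract shift_down_inj)
  qed
  moreover have "set (contract p i x) \<subseteq> {1..n - 1}"
  proof
    fix y assume "y \<in> set (contract p i x)"
    then obtain z where z: "z \<in> set x" "z \<noteq> i" "y = shift_down i z"
      using x1 p by (auto simp: set_contract)
    moreover have "z \<in> {1..n}" using x1 z by blast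
    ultimately show "y \<in> {1..n - 1}" using i by (auto simp: shift_down_def)
  qed
  ultimately show ?thesis using x1 by (simp add: kperms_def)
qed

lemma expand_in:
  assumes q: "q \<in> kperms (n - 1) (k - 1)"
  shows "expand p i q \<in> layer n k p i"
proof -
  have q1: "length q = k - 1" "distinct q" "set q \<subseteq> {1..n - 1}" using q by (auto simp: kperms_def)
  have "distinct (expand p i q)"
    unfolding distinct_conv_nth
  proof (intro allI impI)
    fix a b assume ab: "a < length (expand p i q)" "b < length (expand p i q)" "a \<noteq> b"
    show "expand p i q ! a \<noteq> expand p i q ! b"
      using ab q1 p by (auto simp: nth_expand nth_eq_iff_index_eq unskip_pos_def)
  qed
  moreover have "set (expand p i q) \<subseteq> {1..n}"
    using q1 p i by (auto simp: set_expand shift_up_def)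
  moreover have "expand p i q ! p = i" using p q1 by (simp add: nth_expand)
  ultimately show ?thesis using q1 p by (simp add: layer_def kperms_def)
qed

lemma expand_contract:
  assumes x: "x \<in> layer n k p i"
  shows "expand p i (contract p i x) = x"
proof (rule nth_equalityI)
  have x1: "length x = k" "distinct x" "x ! p = i" using x by (auto simp: layer_def kperms_def)
  show "length (expand p i (contract p i x)) = length x" using x1 p by simp
  fix m assume m: "m < length (expand p i (contract p i x))"
  show "expand p i (contract p i x) ! m = x ! m"
  proof (cases "m = p")
    case False
    have "m < k" using m x1 p by simp
    hence "x ! m \<noteq> i" using False x1 p nth_eq_iff_index_eq by metis
    moreover have "unskip_pos p m < length x - 1" using False m x1 p by (auto simp: unskip_pos_def)
    ultimately show ?thesis using m False x1 by (simp add: nth_expand nth_contract skip_unskip shift_up_down)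
  qed (use m x1 in \<open>simp add: nth_expand\<close>)
qed

lemma contract_expand:
  assumes q: "q \<in> kperms (n - 1) (k - 1)"
  shows "contract p i (expand p i q) = q"
proof (rule nth_equalityI)
  fix m assume m: "m < length (contract p i (expand p i q))"
  have "skip_pos p m < Suc (length q)" using m by (auto simp: skip_pos_def)
  thus "contract p i (expand p i q) ! m = q ! m" using m by (simp add: nth_expand nth_contract)
qed simp

lemma contract_adj:
  assumes x: "x \<in> layer n k p i" and y: "y \<in> layer n k p i" and e: "star_adj n k x y"
  shows "star_adj (n - 1) (k - 1) (contract p i x) (contract p i y)"
proof -
  have x1: "length x = k" "distinct x" "set x \<subseteq> {1..n}" "x ! p = i" "y ! p = i"
    using x y by (auto simp: layer_def kperms_def)
  from e[unfolded star_adj_def] show ?thesis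
  proof (elim disjE exE bexE conjE)
    fix j assume j: "1 \<le> j" "j < k" "y = x[0 := x ! j, j := x ! 0]"
    have "j \<noteq> p"
    proof
      assume "j = p"
      hence "x ! 0 = x ! p" using j x1 by simp
      thus False using x1 p nth_eq_iff_index_eq[of x 0 p] by auto
    qed
    hence "1 \<le> unskip_pos p j" "unskip_pos p j < k - 1" using j p by (auto simp: unskip_pos_def)
    moreover have "contract p i y = (contract p i x)[0 := contract p i x ! unskip_pos p j,
                                                   unskip_pos p j := contract p i x ! 0]"
      using contract_swap[OF p(1) _ j(1) _ \<open>j \<noteq> p\<close>] j x1 p by simp
    ultimately show ?thesis by (intro star_adj_swapI)
  next
    fix a assume a: "a \<in> {1..n} - set x" "y = x[0 := a]"
    have "a \<noteq> i" using a x1 p by (metis DiffD2 nth_mem)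
    have "shift_down i a \<notin> set (contract p i x)"
    proof
      assume "shift_down i a \<in> set (contract p i x)"
      then obtain z where z: "z \<in> set x" "z \<noteq> i" "shift_down i a = shift_down i z"
        using x1 p by (auto simp: set_contract)
      hence "a = z" using \<open>a \<noteq> i\<close> shift_down_inj by blast
      thus False using a z by simp
    qed
    moreover have "shift_down i a \<in> {1..n - 1}" using a \<open>a \<noteq> i\<close> i by (auto simp: shift_down_def)
    ultimately show ?thesis using a contract_update_hd[OF p(1)] by (intro star_adj_repI) auto
  qed
qed

lemma expand_adj:
  assumes x: "x \<in> kperms (n - 1) (k - 1)" and e: "star_adj (n - 1) (k - 1) x y"
  shows "star_adj n k (expand p i x) (expand p i y)"
proof -
  have x1: "length x = k - 1" "x \<noteq> []" using x p by (auto simp: kperms_def)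
  from e[unfolded star_adj_def] show ?thesis
  proof (elim disjE exE bexE conjE)
    fix j assume j: "1 \<le> j" "j < k - 1" "y = x[0 := x ! j, j := x ! 0]"
    have "1 \<le> skip_pos p j" "skip_pos p j < k" using j p by (auto simp: skip_pos_def)
    moreover have "expand p i y = (expand p i x)[0 := expand p i x ! skip_pos p j,
                                               skip_pos p j := expand p i x ! 0]"
      using expand_swap[OF p(1) _ j(1)] j x1 p by simp
    ultimately show ?thesis by (intro star_adj_swapI)
  next
    fix a assume a: "a \<in> {1..n - 1} - set x" "y = x[0 := a]"
    have "shift_up i a \<in> {1..n} - set (expand p i x)"
      using a x1 p i by (auto simp: set_expand shift_up_def)
    moreover have "expand p i y = (expand p i x)[0 := shift_up i a]"
      using expand_update_hd[OF p(1) _ x1(2)] a x1 p by simp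
    ultimately show ?thesis by (intro star_adj_repI)
  qed
qed

lemma kappa_layer_le:
  assumes hc: "hcut (layer n k p i) (star_adj n k) h S"
  shows "kappa_h (kperms (n - 1) (k - 1)) (star_adj (n - 1) (k - 1)) h \<le> card S"
proof -
  have "hcut (kperms (n - 1) (k - 1)) (star_adj (n - 1) (k - 1)) h (contract p i ` S)
      \<and> card (contract p i ` S) = card S"
    using contract_in expand_in expand_contract contract_expand contract_adj expand_adj
    by (intro hcut_iso[OF hc finite_kperms, where \<psi> = "expand p i"]) auto
  thus ?thesis by (metis kappa_h_le)
qed

end

section \<open>An h-cut smaller than a layer\<close>

text \<open>Given a (k-1)-permutation \<open>b\<close>, the vertices \<open>a # b\<close> with \<open>a \<notin> b\<close> form a clique of
  S(n,k).  Its neighbours outside the clique are exactly the vertices \<open>b ! m # b[m := a]\<close>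
  reached by a swap; removing them cuts the clique off.\<close>
definition clique :: "nat \<Rightarrow> nat list \<Rightarrow> nat list set" where
  "clique n b = (\<lambda>a. a # b) ` ({1..n} - set b)"

definition clique_nbhd :: "nat \<Rightarrow> nat list \<Rightarrow> nat list set" where
  "clique_nbhd n b = (\<lambda>(m, a). b ! m # b[m := a]) ` ({..<length b} \<times> ({1..n} - set b))"

definition rep_nbrs :: "nat \<Rightarrow> nat list \<Rightarrow> nat list set" where
  "rep_nbrs n w = (\<lambda>d. w[0 := d]) ` ({1..n} - set w)"

lemma rep_nbrs_card:
  assumes w: "w \<in> kperms n k" and k: "1 \<le> k"
  shows "card (rep_nbrs n w) = n - k"
proof -
  have w1: "length w = k" "distinct w" "set w \<subseteq> {1..n}" using w by (auto simp: kperms_def)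
  have "inj_on (\<lambda>d. w[0 := d]) ({1..n} - set w)"
  proof (rule inj_onI)
    fix d d' assume "w[0 := d] = w[0 := d']"
    hence "w[0 := d] ! 0 = w[0 := d'] ! 0" by simp
    thus "d = d'" using w1 k by simp
  qed
  moreover have "card ({1..n} - set w) = n - k"
    using w1 by (simp add: card_Diff_subset distinct_card)
  ultimately show ?thesis by (simp add: rep_nbrs_def card_image)
qed

lemma rep_nbrs_adj:
  assumes w: "w \<in> kperms n k" and z: "z \<in> rep_nbrs n w"
  shows "z \<in> kperms n k \<and> star_adj n k w z"
proof -
  have w1: "length w = k" "distinct w" "set w \<subseteq> {1..n}" using w by (auto simp: kperms_def)
  obtain d where d: "d \<in> {1..n} - set w" "z = w[0 := d]" using z by (auto simp: rep_nbrs_def)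
  have "distinct (w[0 := d])" using w1 d by (intro distinct_list_update) auto
  moreover have "set (w[0 := d]) \<subseteq> {1..n}" using w1 d by (intro set_update_subsetI) auto
  ultimately show ?thesis using w1 d by (auto simp: kperms_def intro: star_adj_repI)
qed

lemma update_fresh_inj:
  assumes m: "m < length b" "m' < length b" and a: "a \<notin> set b"
    and eq: "b[m := a] = b[m' := a']"
  shows "m = m' \<and> a = a'"
proof -
  have "m = m'"
  proof (rule ccontr)
    assume "m \<noteq> m'"
    hence "b[m' := a'] ! m = b ! m" by simp
    hence "a = b ! m" using eq m by (metis nth_list_update_eq)
    thus False using a m by simp
  qed
  thus ?thesis using eq m by (metis nth_list_update_eq)
qed

lemma clique_nbhd_tl_inj:
  assumes x: "x \<in> clique_nbhd n b" and y: "y \<in> clique_nbhd n b" and tl_eq: "tl x = tl y"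
  shows "x = y"
proof -
  obtain m a where ma: "m < length b" "a \<notin> set b" "x = b ! m # b[m := a]"
    using x by (auto simp: clique_nbhd_def)
  obtain m' a' where ma': "m' < length b" "y = b ! m' # b[m' := a']"
    using y by (auto simp: clique_nbhd_def)
  have "b[m := a] = b[m' := a']" using tl_eq ma ma' by simp
  hence "m = m' \<and> a = a'" using ma(1,2) ma'(1) by (intro update_fresh_inj)
  thus ?thesis using ma ma' by simp
qed

lemma hd_clique_nbhd: "x \<in> clique_nbhd n b \<Longrightarrow> x ! 0 \<in> set b"
  by (auto simp: clique_nbhd_def)

lemma hd_clique: "x \<in> clique n b \<Longrightarrow> x ! 0 \<notin> set b"
  by (auto simp: clique_def)

context
  fixes n k :: nat and b :: "nat list"
  assumes b: "b \<in> kperms n (k - 1)" and k: "1 \<le> k"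
begin

lemma base_facts: "length b = k - 1" "distinct b" "set b \<subseteq> {1..n}"
  using b by (auto simp: kperms_def)

lemma clique_subset: "clique n b \<subseteq> kperms n k"
  using base_facts k by (auto simp: clique_def kperms_def)

lemma clique_nbhd_subset: "clique_nbhd n b \<subseteq> kperms n k"
proof
  fix x assume "x \<in> clique_nbhd n b"
  then obtain m a where ma: "m < k - 1" "a \<in> {1..n} - set b" "x = b ! m # b[m := a]"
    using base_facts by (auto simp: clique_nbhd_def)
  have bm: "b ! m \<in> set b" using ma base_facts by simp
  hence "b ! m \<notin> set (b[m := a])" using ma base_facts by (auto simp: set_update_distinct)
  moreover have "distinct (b[m := a])" using ma base_facts by (intro distinct_list_update) auto
  moreover have "set (b[m := a]) \<subseteq> {1..n}" using ma base_facts by (intro set_update_subsetI) auto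
  moreover have "b ! m \<in> {1..n}" using bm base_facts by blast
  ultimately show "x \<in> kperms n k" using ma base_facts k by (auto simp: kperms_def)
qed

lemma clique_closed:
  "\<forall>x\<in>clique n b. \<forall>y\<in>kperms n k - clique_nbhd n b. star_adj n k x y \<longrightarrow> y \<in> clique n b"
proof (intro ballI impI)
  fix x y assume x: "x \<in> clique n b" and y: "y \<in> kperms n k - clique_nbhd n b"
    and e: "star_adj n k x y"
  obtain a where a: "a \<in> {1..n} - set b" "x = a # b" using x by (auto simp: clique_def)
  from e[unfolded star_adj_def] show "y \<in> clique n b"
  proof (elim disjE exE bexE conjE)
    fix j assume j: "1 \<le> j" "j < k" "y = x[0 := x ! j, j := x ! 0]"
    obtain m where m: "j = Suc m" using j by (cases j) auto
    have "y = b ! m # b[m := a]" using a j m by simp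
    moreover have "m < length b" using j m base_facts by simp
    ultimately have "y \<in> clique_nbhd n b"
      unfolding clique_nbhd_def using a by (intro image_eqI[where x = "(m, a)"]) auto
    thus ?thesis using y by simp
  next
    fix d assume "d \<in> {1..n} - set x" "y = x[0 := d]"
    thus ?thesis using a by (auto simp: clique_def)
  qed
qed

lemma swap_escapes:
  assumes w: "w \<in> kperms n k" and z: "z \<in> rep_nbrs n w \<inter> clique_nbhd n b"
  shows "\<exists>s\<in>kperms n k - clique_nbhd n b. star_adj n k w s \<and> s \<notin> rep_nbrs n w"
proof -
  have w1: "length w = k" "distinct w" "set w \<subseteq> {1..n}" using w by (auto simp: kperms_def)
  obtain m a where ma: "m < k - 1" "a \<notin> set b" "z = b ! m # b[m := a]"
    using z base_facts by (auto simp: clique_nbhd_def)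
  obtain d where zd: "z = w[0 := d]" using z by (auto simp: rep_nbrs_def)
  have tl_w: "tl w = b[m := a]" using zd ma w1 k by (cases w) auto
  have w_m: "w ! Suc m = a" using tl_w ma base_facts w1 k by (cases w) auto
  define s where "s = w[0 := w ! Suc m, Suc m := w ! 0]"
  have sm: "Suc m < k" using ma by simp
  have "s \<in> kperms n k" using w1 sm by (auto simp: s_def kperms_def)
  moreover have "star_adj n k w s" unfolding s_def by (rule star_adj_swapI) (use sm in auto)
  moreover have "s \<notin> clique_nbhd n b"
  proof
    assume "s \<in> clique_nbhd n b"
    hence "s ! 0 \<in> set b" by (rule hd_clique_nbhd)
    moreover have "s ! 0 = a" using sm w1 w_m by (simp add: s_def nth_list_update)
    ultimately show False using ma by simp
  qed
  moreover have "s \<notin> rep_nbrs n w"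
  proof
    assume "s \<in> rep_nbrs n w"
    then obtain d' where "s = w[0 := d']" by (auto simp: rep_nbrs_def)
    hence "s ! Suc m = w ! Suc m" by simp
    moreover have "s ! Suc m = w ! 0" using sm w1 by (simp add: s_def)
    moreover have "w ! 0 \<noteq> w ! Suc m" using w1 sm by (simp add: nth_eq_iff_index_eq)
    ultimately show False by simp
  qed
  ultimately show ?thesis by blast
qed

text \<open>Minimum degree of S(n,k) minus the neighbourhood: at most one replacement neighbour is
  lost, and then a swap neighbour makes up for it.\<close>
lemma clique_nbhd_degree:
  assumes w: "w \<in> kperms n k - clique_nbhd n b"
  shows "n - k \<le> card {w' \<in> kperms n k - clique_nbhd n b. star_adj n k w w'}"
proof -
  define N where "N = {w' \<in> kperms n k - clique_nbhd n b. star_adj n k w w'}"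
  define R where "R = rep_nbrs n w"
  have finN: "finite N" using finite_kperms by (simp add: N_def)
  have finR: "finite R" by (simp add: R_def rep_nbrs_def)
  have cardR: "card R = n - k" using rep_nbrs_card w k by (simp add: R_def)
  have RN: "R - clique_nbhd n b \<subseteq> N" using rep_nbrs_adj w by (auto simp: R_def N_def)
  show ?thesis
  proof (cases "R \<inter> clique_nbhd n b = {}")
    case True
    hence "R \<subseteq> N" using RN by blast
    hence "card R \<le> card N" by (rule card_mono[OF finN])
    thus ?thesis using cardR by (simp add: N_def)
  next
    case False
    then obtain z where z: "z \<in> R \<inter> clique_nbhd n b" by blast
    then obtain s where s: "s \<in> N" "s \<notin> R" using swap_escapes w by (auto simp: R_def N_def)
    have tl_R: "tl y = tl w" if "y \<in> R" for y
      using that by (cases w) (auto simp: R_def rep_nbrs_def)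
    have "R \<inter> clique_nbhd n b \<subseteq> {z}"
    proof
      fix y assume "y \<in> R \<inter> clique_nbhd n b"
      hence "y = z" using z tl_R by (intro clique_nbhd_tl_inj[of y n b z]) auto
      thus "y \<in> {z}" by simp
    qed
    hence "insert s (R - {z}) \<subseteq> N" using RN s by blast
    hence "card (insert s (R - {z})) \<le> card N" by (rule card_mono[OF finN])
    moreover have "card (insert s (R - {z})) = card R"
    proof -
      have "0 < card R" using finR z by (auto simp: card_gt_0_iff)
      thus ?thesis using s(2) z finR by (simp add: card_Diff_singleton)
    qed
    ultimately show ?thesis using cardR by (simp add: N_def)
  qed
qed

lemma clique_nbhd_hcut:
  assumes h: "h \<le> n - k" and kn: "k \<le> n"
    and w0: "w0 \<in> kperms n k - (clique n b \<union> clique_nbhd n b)"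
  shows "hcut (kperms n k) (star_adj n k) h (clique_nbhd n b)"
proof -
  have "card ({1..n} - set b) = n - (k - 1)"
    using base_facts by (simp add: card_Diff_subset distinct_card)
  hence "0 < card ({1..n} - set b)" using kn k by simp
  then obtain a where a: "a \<in> {1..n} - set b" by (metis card_gt_0_iff ex_in_conv)
  have u: "a # b \<in> clique n b" using a by (simp add: clique_def)
  hence u_out: "a # b \<in> kperms n k - clique_nbhd n b"
    using clique_subset hd_clique hd_clique_nbhd by blast
  have "\<not> reach (kperms n k - clique_nbhd n b) (star_adj n k) (a # b) w0"
    using reach_closed[of _ _ "a # b" w0 "clique n b"] clique_closed u w0 by blast
  moreover have "\<forall>v\<in>kperms n k - clique_nbhd n b.
      h \<le> card {w \<in> kperms n k - clique_nbhd n b. star_adj n k v w}"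
    using clique_nbhd_degree h le_trans by blast
  ultimately show ?thesis unfolding hcut_def using clique_nbhd_subset u_out w0 by blast
qed

lemma clique_in_layer:
  assumes "1 \<le> p" "p < k"
  shows "clique n b \<subseteq> layer n k p (b ! (p - 1))"
  using assms clique_subset by (auto simp: clique_def layer_def nth_Cons')

lemma card_clique_nbhd_off_layer:
  assumes p: "1 \<le> p" "p < k"
  shows "card (clique_nbhd n b - layer n k p (b ! (p - 1))) \<le> card (clique n b)"
proof -
  let ?f = "\<lambda>x. b ! (p - 1) # b[p - 1 := x ! 0]"
  have "clique_nbhd n b - layer n k p (b ! (p - 1)) \<subseteq> ?f ` clique n b"
  proof
    fix e assume e: "e \<in> clique_nbhd n b - layer n k p (b ! (p - 1))"
    then obtain m a where ma: "m < length b" "a \<in> {1..n} - set b" "e = b ! m # b[m := a]"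
      by (auto simp: clique_nbhd_def)
    have "e ! p \<noteq> b ! (p - 1)" using e clique_nbhd_subset by (auto simp: layer_def)
    hence "m = p - 1" using ma p by (cases "m = p - 1") (auto simp: nth_Cons')
    hence "e = ?f (a # b)" using ma by simp
    moreover have "a # b \<in> clique n b" using ma by (simp add: clique_def)
    ultimately show "e \<in> ?f ` clique n b" by blast
  qed
  moreover have "finite (clique n b)" by (simp add: clique_def)
  ultimately show ?thesis by (meson card_image_le card_mono finite_imageI le_trans)
qed

text \<open>For \<open>k \<ge> 3\<close> and \<open>k < n\<close> the layer also contains a vertex outside the clique and its
  neighbourhood: change one entry of \<open>b\<close> other than the \<open>(p-1)\<close>-th and prepend a fresh symbol.\<close>
lemma layer_witness:
  assumes p: "1 \<le> p" "p < k" and k3: "3 \<le> k" and kn: "k \<le> n - 1"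
  shows "\<exists>w0\<in>layer n k p (b ! (p - 1)). w0 \<notin> clique n b \<union> clique_nbhd n b"
proof -
  define R where "R = {1..n} - set b"
  have "card R = n - (k - 1)" using base_facts by (simp add: R_def card_Diff_subset distinct_card)
  hence R2: "2 \<le> card R" using kn k3 by simp
  obtain a0 where a0: "a0 \<in> R" using R2 by (metis card.empty ex_in_conv not_numeral_le_zero)
  have "card (R - {a0}) \<ge> 1" using R2 a0 by (simp add: R_def card_Diff_singleton)
  then obtain c0 where c0: "c0 \<in> R" "c0 \<noteq> a0"
    by (metis DiffE card.empty ex_in_conv insertCI not_one_le_zero)
  define m0 where "m0 = (if p - 1 = 0 then 1 else 0::nat)"
  have m0: "m0 < k - 1" "m0 \<noteq> p - 1" using k3 by (auto simp: m0_def)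
  define w0 where "w0 = c0 # b[m0 := a0]"
  have "distinct (b[m0 := a0])" using base_facts a0 by (intro distinct_list_update) (auto simp: R_def)
  moreover have "c0 \<notin> set (b[m0 := a0])"
    using c0 set_update_subset_insert[of b m0 a0] by (auto simp: R_def)
  moreover have "set (b[m0 := a0]) \<subseteq> {1..n}"
    using base_facts a0 by (intro set_update_subsetI) (auto simp: R_def)
  ultimately have "w0 \<in> kperms n k" using base_facts c0 k3 by (auto simp: w0_def kperms_def R_def)
  moreover have "w0 ! p = b ! (p - 1)" using p m0 by (simp add: w0_def nth_Cons')
  moreover have "w0 \<notin> clique_nbhd n b" using hd_clique_nbhd c0 by (force simp: w0_def R_def)
  moreover have "w0 \<notin> clique n b"
  proof
    assume "w0 \<in> clique n b"
    hence "b[m0 := a0] = b" by (auto simp: clique_def w0_def)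
    hence "b ! m0 = a0" using m0 base_facts by (metis nth_list_update_eq)
    thus False using a0 m0 base_facts by (auto simp: R_def)
  qed
  ultimately show ?thesis by (auto simp: layer_def)
qed

lemma clique_nbhd_smaller_than_layer:
  assumes p: "1 \<le> p" "p < k" and k3: "3 \<le> k" and kn: "k \<le> n - 1"
  shows "card (clique_nbhd n b) < card (layer n k p (b ! (p - 1)))"
proof -
  let ?L = "layer n k p (b ! (p - 1))" and ?C = "clique n b" and ?N = "clique_nbhd n b"
  obtain w0 where w0: "w0 \<in> ?L" "w0 \<notin> ?C \<union> ?N" using layer_witness[OF assms] by blast
  have finL: "finite ?L" using finite_kperms by (simp add: layer_def)
  have finN: "finite ?N" by (simp add: clique_nbhd_def)
  have finC: "finite ?C" by (simp add: clique_def)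
  have disj: "(?N \<inter> ?L) \<inter> ?C = {}" using hd_clique hd_clique_nbhd by blast
  have "card ?N = card (?N \<inter> ?L) + card (?N - ?L)" using finN by (rule card_Int_Diff)
  also have "\<dots> \<le> card (?N \<inter> ?L) + card ?C" using card_clique_nbhd_off_layer[OF p] by simp
  also have "\<dots> = card ((?N \<inter> ?L) \<union> ?C)" using finN finC disj by (simp add: card_Un_disjoint)
  also have "\<dots> < card ?L"
    using clique_in_layer[OF p] w0 by (intro psubset_card_mono[OF finL]) blast
  finally show ?thesis .
qed

end

lemma kperm_with_entry:
  assumes "1 \<le> p" "p < k" "k \<le> n" "i \<in> {1..n}"
  shows "\<exists>b\<in>kperms n (k - 1). b ! (p - 1) = i"
proof -
  define L where "L = sorted_list_of_set ({1..n} - {i})"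
  have L: "distinct L" "set L = {1..n} - {i}" "length L = n - 1"
    using assms by (auto simp: L_def)
  define c where "c = take (k - 1) (i # L)"
  have c1: "length c = k - 1" using assms L by (simp add: c_def)
  have c2: "distinct c" using L unfolding c_def by (intro distinct_take) simp
  have c3: "set c \<subseteq> {1..n}" using L assms set_take_subset[of "k - 1" "i # L"] by (auto simp: c_def)
  have c4: "c ! 0 = i" using assms by (simp add: c_def)
  define b where "b = c[0 := c ! (p - 1), p - 1 := c ! 0]"
  have pl: "p - 1 < length c" "0 < length c" using c1 assms by auto
  have "length b = k - 1" using c1 by (simp add: b_def)
  moreover have "distinct b" using c2 pl unfolding b_def by (simp only: distinct_swap)
  moreover have "set b \<subseteq> {1..n}" using c3 pl unfolding b_def by (simp only: set_swap)
  moreover have "b ! (p - 1) = i" using pl c4 by (simp add: b_def)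
  ultimately show ?thesis by (auto simp: kperms_def)
qed

lemma small_hcut:
  assumes k3: "3 \<le> k" and kn: "k \<le> n - 1" and h: "h \<le> n - k"
    and p: "1 \<le> p" "p < k" and i: "i \<in> {1..n}"
  shows "\<exists>S'. hcut (kperms n k) (star_adj n k) h S' \<and> card S' < card (layer n k p i)"
proof -
  have k1: "1 \<le> k" and kn': "k \<le> n" using k3 kn by auto
  obtain b where b: "b \<in> kperms n (k - 1)" "b ! (p - 1) = i"
    using kperm_with_entry[OF p kn' i] by blast
  obtain w0 where "w0 \<in> layer n k p i" "w0 \<notin> clique n b \<union> clique_nbhd n b"
    using layer_witness[OF b(1) k1 p k3 kn] b(2) by blast
  hence "hcut (kperms n k) (star_adj n k) h (clique_nbhd n b)"
    by (intro clique_nbhd_hcut[OF b(1) k1 h kn']) (auto simp: layer_def)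
  thus ?thesis using clique_nbhd_smaller_than_layer[OF b(1) k1 p k3 kn] b(2) by blast
qed

lemma layer_not_in_min_hcut:
  assumes "3 \<le> k" "k \<le> n - 1" "h \<le> n - k" "1 \<le> p" "p < k" "i \<in> {1..n}"
    and hc: "hcut (kperms n k) (star_adj n k) h S" and min: "card S = kappa_h (kperms n k) (star_adj n k) h"
  shows "\<not> layer n k p i \<subseteq> S"
proof -
  obtain S' where "hcut (kperms n k) (star_adj n k) h S'" "card S' < card (layer n k p i)"
    using small_hcut[OF assms(1-6)] by blast
  moreover have "finite S" using hc finite_kperms by (auto simp: hcut_def intro: finite_subset)
  ultimately show ?thesis using min by (intro min_hcut_no_large_subset)
qed

theorem lemma3p3:
  fixes n k h t :: nat and S X :: "nat list set"
  assumes "3 \<le> k" and "k \<le> n - 1" and "1 \<le> h" and "h \<le> n - k"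
    and "hcut (kperms n k) (star_adj n k) h S"
    and "card S = kappa_h (kperms n k) (star_adj n k) h"
    and "component (kperms n k) (star_adj n k) S X"
    and "2 \<le> t" and "t \<le> k"
  defines "Y \<equiv> kperms n k - (S \<union> X)"
  defines "J \<equiv> {i \<in> {1..n}. X \<inter> sub_verts n k t i \<noteq> {}}"
  defines "J' \<equiv> {i \<in> J. Y \<inter> sub_verts n k t i \<noteq> {}}"
  defines "T \<equiv> {i \<in> {1..n}. Y \<inter> sub_verts n k t i \<noteq> {}}"
  shows "(\<forall>i \<in> J'. hcut (sub_verts n k t i) (star_adj n k) (h - 1) (S \<inter> sub_verts n k t i))
       \<and> kappa_h (kperms n k) (star_adj n k) h
           \<ge> card J' * kappa_h (kperms (n - 1) (k - 1)) (star_adj (n - 1) (k - 1)) (h - 1)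
       \<and> J \<union> T = {1..n}"
proof -
  have p: "1 \<le> t - 1" "t - 1 < k" using assms(8,9) by auto
  have layers: "\<And>i. sub_verts n k t i = layer n k (t - 1) i" by (rule sub_verts_layer)
  have part_a: "\<forall>i\<in>J'. hcut (sub_verts n k t i) (star_adj n k) (h - 1) (S \<inter> sub_verts n k t i)"
  proof
    fix i assume "i \<in> J'"
    then obtain x y where "x \<in> X \<inter> layer n k (t - 1) i" "y \<in> layer n k (t - 1) i - (S \<union> X)"
      by (auto simp: J'_def J_def Y_def layers)
    thus "hcut (sub_verts n k t i) (star_adj n k) (h - 1) (S \<inter> sub_verts n k t i)"
      unfolding layers by (rule layer_trace_hcut[OF assms(5,7) p])
  qed
  have "card J' * kappa_h (kperms (n - 1) (k - 1)) (star_adj (n - 1) (k - 1)) (h - 1) \<le> card S"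
  proof (rule card_ge_disjoint_traces[where L = "sub_verts n k t"])
    show "finite S" using assms(5) finite_kperms by (auto simp: hcut_def intro: finite_subset)
    show "finite J'" by (simp add: J'_def J_def)
    show "\<forall>i\<in>J'. \<forall>j\<in>J'. i \<noteq> j \<longrightarrow> sub_verts n k t i \<inter> sub_verts n k t j = {}"
      by (auto simp: layers layer_def)
    show "\<forall>i\<in>J'. kappa_h (kperms (n - 1) (k - 1)) (star_adj (n - 1) (k - 1)) (h - 1)
                  \<le> card (S \<inter> sub_verts n k t i)"
      using part_a kappa_layer_le[OF p] by (auto simp: J'_def J_def layers)
  qed
  moreover have "J \<union> T = {1..n}"
  proof
    show "{1..n} \<subseteq> J \<union> T"
    proof
      fix i assume i: "i \<in> {1..n}"
      then obtain v where "v \<in> layer n k (t - 1) i" "v \<notin> S"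
        using layer_not_in_min_hcut[OF assms(1,2,4) p _ assms(5,6)] by blast
      thus "i \<in> J \<union> T" using i by (auto simp: J_def T_def Y_def layers layer_def)
    qed
  qed (auto simp: J_def T_def)
  ultimately show ?thesis using part_a assms(6) by simp
qed

end
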